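(* For every $n\ge 1$: (a) the number of Dyck paths $D$ of semilength $n$ such that $\mathcal N\cap\mathcal D\subseteq\mathcal F$ equals the number of Motzkin paths of length $n$; (b) the number of Dyck paths $D$ of semilength $n$ such that $\mathcal N\cap\mathcal D=\emptyset$ equals the number of Riordan paths of length $n$.
   Context: Work in an $n\times n$ array of unit cells; the cell $(i,j)$ is the one in column $i$ (columns numbered $1,\dots,n$ from left to right) and row $j$ (rows numbered $1,\dots,n$ from bottom to top). A Dyck path of semilength $n$ is a lattice path from $(0,0)$ to $(n,n)$ with unit north and east steps that never goes below the line $y=x$. Row-area sequence: $r_0=-1$ and, for $1\le k\le n$, $r_k=k-1-x_k$ where $x_k$ is the $x$-coordinate of the $k$-th north step (the number of full cells in row $k$ strictly between the path and the diagonal). Column-area sequence: for $1\le k\le n$, $c_k=y_k-k$ where $y_k$ is the height of the $k$-th east step (the number of full cells in column $k$ strictly between the path and the diagonal), and $c_{n+1}=-1$. A valley of $D$ is an east step immediately followed by a north step; if the east step is the $k$-th east step and the north step is the $\ell$-th north step, the valley is at position $(k,\ell)$ (column $k$, row $\ell$). Define: $\mathcal D=\{k\in\{1,\dots,n\}: c_{k+1}=c_k-1\}$; $\mathcal F=\{k\in\{1,\dots,n\}: r_{k+1+c_{k+1}}=r_{k-1}+c_{k+1}+2\}$; $\mathcal N$ = the set of $k\in\{1,\dots,n\}$ such that row $k$ contains no valley of $D$. A Motzkin path of length $n$ is a lattice path from $(0,0)$ to $(n,0)$ with steps $(1,1)$, $(1,-1)$, $(1,0)$ never going below the $x$-axis;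 a Riordan path is a Motzkin path with no level step $(1,0)$ at height zero. *)

theory Defs
  imports Main
begin

(* A Dyck path is a list of steps: True = north step, False = east step. *)
definition dyck_path :: "nat \<Rightarrow> bool list \<Rightarrow> bool" where
  "dyck_path n p \<longleftrightarrow> length p = 2 * n \<and> length (filter id p) = n \<and>
     (\<forall>i \<le> length p. length (filter Not (take i p)) \<le> length (filter id (take i p)))"

definition north_idx :: "bool list \<Rightarrow> nat list" where
  "north_idx p = filter (\<lambda>i. p ! i) [0..<length p]"
definition east_idx :: "bool list \<Rightarrow> nat list" where
  "east_idx p = filter (\<lambda>i. \<not> p ! i) [0..<length p]"

definition xcoord :: "bool list \<Rightarrow> nat \<Rightarrow> nat" where
  "xcoord p k = length (filter Not (take (north_idx p ! (k - 1)) p))"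
definition ycoord :: "bool list \<Rightarrow> nat \<Rightarrow> nat" where
  "ycoord p k = length (filter id (take (east_idx p ! (k - 1)) p))"

definition row_area :: "bool list \<Rightarrow> nat \<Rightarrow> int" where
  "row_area p k = (if k = 0 then -1 else int k - 1 - int (xcoord p k))"
definition col_area :: "nat \<Rightarrow> bool list \<Rightarrow> nat \<Rightarrow> int" where
  "col_area n p k = (if k = n + 1 then -1 else int (ycoord p k) - int k)"

(* valley at (k,l): the k-th east step is immediately followed by the l-th north step *)
definition valley :: "bool list \<Rightarrow> nat \<Rightarrow> nat \<Rightarrow> bool" where
  "valley p k l \<longleftrightarrow> (\<exists>i. Suc i < length p \<and> \<not> p ! i \<and> p ! Suc i \<and>
     length (filter Not (take (Suc i) p)) = k \<and> length (filter id (take (Suc (Suc i)) p)) = l)"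

definition setD :: "nat \<Rightarrow> bool list \<Rightarrow> nat set" where
  "setD n p = {k \<in> {1..n}. col_area n p (k + 1) = col_area n p k - 1}"
definition setF :: "nat \<Rightarrow> bool list \<Rightarrow> nat set" where
  "setF n p = {k \<in> {1..n}.
     row_area p (nat (int k + 1 + col_area n p (k + 1))) =
     row_area p (k - 1) + col_area n p (k + 1) + 2}"
definition setN :: "nat \<Rightarrow> bool list \<Rightarrow> nat set" where
  "setN n p = {k \<in> {1..n}. \<not> (\<exists>c. valley p c k)}"

definition motzkin_path :: "nat \<Rightarrow> int list \<Rightarrow> bool" where
  "motzkin_path n s \<longleftrightarrow> length s = n \<and> set s \<subseteq> {-1, 0, 1} \<and>
     (\<forall>i \<le> n. sum_list (take i s) \<ge> 0) \<and> sum_list s = 0"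
definition riordan_path :: "nat \<Rightarrow> int list \<Rightarrow> bool" where
  "riordan_path n s \<longleftrightarrow> motzkin_path n s \<and>
     (\<forall>i < n. s ! i = 0 \<longrightarrow> sum_list (take i s) \<noteq> 0)"

end

theory Submission
  imports Defs
begin

text \<open>
  A Dyck path is determined by its x-sequence \<open>X\<close>, where \<open>X k\<close> is the x-coordinate of the
  \<open>k\<close>-th north step; these are exactly the weakly increasing sequences with \<open>X k < k\<close>.
  Let \<open>V\<close> be the set of values of \<open>X\<close>. The word whose \<open>k\<close>-th letter is
  \<open>[k \<in> V] - [X k \<noteq> X (k - 1)]\<close> is a Motzkin path whose height after \<open>k\<close> letters is
  \<open>#{v \<in> V. X k < v \<le> k}\<close>. A level letter is ambiguous: it arises either from a jump together
  with a new value, or from neither. The former forces positive height, so the word determines \<open>X\<close>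
  once the latter is confined to height zero. Read on the path, this is the condition
  \<open>setN \<inter> setD \<subseteq> setF\<close>; the word is moreover a Riordan path iff the latter never happens at all,
  which is \<open>setN \<inter> setD = {}\<close>. Reconstructing \<open>V\<close> and the jumps from an arbitrary Motzkin path
  shows that the map is onto.
\<close>

lemma card_less_nth_sorted:
  assumes ss: "sorted_wrt (<) (xs::nat list)" and m: "m < length xs"
  shows "card {a \<in> set xs. a < xs!m} = m"
proof -
  have "{a \<in> set xs. a < xs!m} = set (take m xs)"
  proof (rule set_eqI)
    fix a
    show "a \<in> {a \<in> set xs. a < xs!m} \<longleftrightarrow> a \<in> set (take m xs)"
    proof
      assume a: "a \<in> {a \<in> set xs. a < xs!m}"
      then obtain i where i: "i < length xs" "a = xs!i" by (auto simp: in_set_conv_nth)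
      have "i < m"
      proof (rule ccontr)
        assume "\<not> i < m"
        then have "xs!m \<le> xs!i"
          using sorted_nth_mono[OF strict_sorted_imp_sorted[OF ss]] i by simp
        then show False using a i by simp
      qed
      then show "a \<in> set (take m xs)" using i by (auto simp: in_set_conv_nth)
    next
      assume "a \<in> set (take m xs)"
      then obtain i where i: "i < m" "a = xs!i" using m by (auto simp: in_set_conv_nth)
      have "xs!i < xs!m" using sorted_wrt_nth_less[OF ss i(1) m] .
      then show "a \<in> {a \<in> set xs. a < xs!m}" using i m by auto
    qed
  qed
  moreover have "distinct xs" using ss strict_sorted_iff by blast
  ultimately show ?thesis using m by (simp add: distinct_card)
qed

lemma nth_less_iff_card_less:
  assumes ss: "sorted_wrt (<) (xs::nat list)" and m: "m < length xs"
  shows "xs!m < k \<longleftrightarrow> m < card {a \<in> set xs. a < k}"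
proof
  assume lt: "xs!m < k"
  have sub: "{a \<in> set xs. a < xs!m} \<subseteq> {a \<in> set xs. a < k}" using lt by auto
  have "xs!m \<in> {a \<in> set xs. a < k}" "xs!m \<notin> {a \<in> set xs. a < xs!m}"
    using lt m by auto
  then have "{a \<in> set xs. a < xs!m} \<subset> {a \<in> set xs. a < k}" using sub by blast
  then have "card {a \<in> set xs. a < xs!m} < card {a \<in> set xs. a < k}"
    by (simp add: psubset_card_mono)
  then show "m < card {a \<in> set xs. a < k}" using card_less_nth_sorted[OF ss m] by simp
next
  assume h: "m < card {a \<in> set xs. a < k}"
  show "xs!m < k"
  proof (rule ccontr)
    assume "\<not> xs!m < k"
    then have "card {a \<in> set xs. a < k} \<le> card {a \<in> set xs. a < xs!m}"
      by (intro card_mono) auto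
    then show False using card_less_nth_sorted[OF ss m] h by simp
  qed
qed

lemma length_filter_take:
  "length (filter Q (take m p)) = card {i. i < m \<and> i < length p \<and> Q (p!i)}"
proof -
  have "length (filter Q (take m p)) = card {i. i < length (take m p) \<and> Q (take m p ! i)}"
    by (rule length_filter_conv_card)
  also have "{i. i < length (take m p) \<and> Q (take m p ! i)} = {i. i < m \<and> i < length p \<and> Q (p!i)}"
    by auto
  finally show ?thesis .
qed

lemma length_filter_take_mono:
  "a \<le> b \<Longrightarrow> length (filter Q (take a p)) \<le> length (filter Q (take b p))"
  unfolding length_filter_take by (rule card_mono) auto

lemma length_filter_id_Not_take:
  "length (filter id (take m p)) + length (filter Not (take m p)) = min m (length p)"
  using sum_length_filter_compl[of id "take m p"] by simp

lemma length_filter_index: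
  "length (filter (\<lambda>i. Q (p!i)) [0..<length p]) = length (filter Q p)"
proof -
  have "length (filter (\<lambda>i. Q (p!i)) [0..<length p]) = card {i. i < length p \<and> Q (p!i)}"
    by (simp add: length_filter_conv_card cong: conj_cong)
  also have "\<dots> = length (filter Q p)" by (simp add: length_filter_conv_card)
  finally show ?thesis .
qed

lemma filter_index_nth:
  fixes Q :: "bool \<Rightarrow> bool" and p :: "bool list"
  defines "ix \<equiv> filter (\<lambda>i. Q (p!i)) [0..<length p]"
  assumes j: "j < length ix"
  shows "ix!j < length p" "Q (p!(ix!j))" "length (filter Q (take (ix!j) p)) = j"
proof -
  have ss: "sorted_wrt (<) ix" unfolding ix_def by (rule sorted_wrt_filter) simp
  have "ix!j \<in> set ix" using j by simp
  then show "ix!j < length p" and "Q (p!(ix!j))" unfolding ix_def by auto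
  have "length (filter Q (take (ix!j) p)) = card {i. i < ix!j \<and> i < length p \<and> Q (p!i)}"
    by (rule length_filter_take)
  also have "{i. i < ix!j \<and> i < length p \<and> Q (p!i)} = {a \<in> set ix. a < ix!j}"
    unfolding ix_def by auto
  also have "card \<dots> = j" using card_less_nth_sorted[OF ss j] .
  finally show "length (filter Q (take (ix!j) p)) = j" .
qed

section \<open>X-sequences and their step words\<close>

definition x_sequence :: "nat \<Rightarrow> (nat \<Rightarrow> nat) \<Rightarrow> bool" where
  "x_sequence n X \<longleftrightarrow> X 0 = 0 \<and> (\<forall>k. 1 \<le> k \<longrightarrow> k \<le> n \<longrightarrow> X k < k) \<and>
     (\<forall>j k. j \<le> k \<longrightarrow> k \<le> n \<longrightarrow> X j \<le> X k)"

definition steps_of :: "nat \<Rightarrow> (nat \<Rightarrow> nat) \<Rightarrow> int list" where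
  "steps_of n X = map (\<lambda>k. of_bool (k \<in> X ` {1..n}) - of_bool (X k \<noteq> X (k-1))) [1..<Suc n]"

abbreviation height :: "int list \<Rightarrow> nat \<Rightarrow> int" where
  "height s k \<equiv> sum_list (take k s)"

definition admissible :: "nat \<Rightarrow> (nat \<Rightarrow> nat) \<Rightarrow> bool" where
  "admissible n X \<longleftrightarrow>
     (\<forall>k\<in>{1..n}. X k = X (k-1) \<longrightarrow> k \<notin> X ` {1..n} \<longrightarrow> height (steps_of n X) k = 0)"

text \<open>How the \<open>k\<close>-th letter of a Motzkin word is read back: as a jump of \<open>X\<close> at \<open>k\<close>,
  and as membership of \<open>k\<close> in the value set.\<close>

definition is_jump :: "int list \<Rightarrow> nat \<Rightarrow> bool" where
  "is_jump s k \<longleftrightarrow> s!(k-1) = -1 \<or> (s!(k-1) = 0 \<and> height s k \<ge> 1)"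

definition is_value :: "int list \<Rightarrow> nat \<Rightarrow> bool" where
  "is_value s k \<longleftrightarrow> s!(k-1) = 1 \<or> (s!(k-1) = 0 \<and> height s k \<ge> 1)"

lemma length_steps_of [simp]: "length (steps_of n X) = n"
  by (simp add: steps_of_def)

lemma nth_steps_of:
  "k < n \<Longrightarrow> steps_of n X ! k = of_bool (Suc k \<in> X ` {1..n}) - of_bool (X (Suc k) \<noteq> X k)"
  unfolding steps_of_def by (simp del: upt_Suc)

lemma nth_steps_of':
  "1 \<le> k \<Longrightarrow> k \<le> n \<Longrightarrow> steps_of n X ! (k-1) = of_bool (k \<in> X ` {1..n}) - of_bool (X k \<noteq> X (k-1))"
  using nth_steps_of[of "k-1" n X] by simp

lemma x_sequence_mono:
  "x_sequence n X \<Longrightarrow> j \<le> k \<Longrightarrow> k \<le> n \<Longrightarrow> X j \<le> X k"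
  by (simp add: x_sequence_def)

lemma x_sequence_less:
  "x_sequence n X \<Longrightarrow> 1 \<le> k \<Longrightarrow> k \<le> n \<Longrightarrow> X k < k"
  by (simp add: x_sequence_def)

lemma x_sequence_0: "x_sequence n X \<Longrightarrow> X 0 = 0"
  by (simp add: x_sequence_def)

lemma x_value_less: "x_sequence n X \<Longrightarrow> v \<in> X`{1..n} \<Longrightarrow> v < n"
  using x_sequence_less by fastforce

lemma zero_x_value: "x_sequence n X \<Longrightarrow> 1 \<le> n \<Longrightarrow> 0 \<in> X`{1..n}"
  using x_sequence_less[of n X 1] by (metis atLeastAtMost_iff image_eqI le_refl less_one)

lemma next_x_value_le:
  assumes X: "x_sequence n X" and k: "k < n" and w: "w \<in> X`{1..n}" and less: "X k < w"
  shows "X (Suc k) \<le> w"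
proof -
  obtain j where j: "j \<in> {1..n}" "w = X j" using w by auto
  have "\<not> j \<le> k" using x_sequence_mono[OF X, of j k] k j less by auto
  then show ?thesis using x_sequence_mono[OF X, of "Suc k" j] j by simp
qed

lemma height_steps_of:
  assumes X: "x_sequence n X" and kn: "k \<le> n"
  shows "height (steps_of n X) k = int (card {v \<in> X`{1..n}. X k < v \<and> v \<le> k})"
  using kn
proof (induction k)
  case 0
  then show ?case by auto
next
  case (Suc k)
  let ?V = "X`{1..n}"
  let ?A = "{v \<in> ?V. X k < v \<and> v \<le> k}"
  let ?B = "{v \<in> ?V. X (Suc k) < v \<and> v \<le> Suc k}"
  let ?C = "{v \<in> ?V. X (Suc k) < v \<and> v \<le> k}"
  have kn: "k < n" using Suc by simp
  have less: "X (Suc k) < Suc k" using x_sequence_less[OF X, of "Suc k"] kn by simp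
  have step: "height (steps_of n X) (Suc k) = height (steps_of n X) k + steps_of n X ! k"
    using kn by (simp add: take_Suc_conv_app_nth)
  have B: "card ?B = card ?C + of_bool (Suc k \<in> ?V)"
  proof -
    have "?B = ?C \<union> ({Suc k} \<inter> ?V)" using less by auto
    then show ?thesis by (simp add: card_Un_disjoint)
  qed
  have A: "card ?A = card ?C + of_bool (X (Suc k) \<noteq> X k)"
  proof (cases "X (Suc k) = X k")
    case True
    then show ?thesis by simp
  next
    case False
    then have jump: "X k < X (Suc k)" using x_sequence_mono[OF X, of k "Suc k"] kn by simp
    have "?A = insert (X (Suc k)) ?C"
    proof (rule set_eqI)
      fix v
      show "v \<in> ?A \<longleftrightarrow> v \<in> insert (X (Suc k)) ?C"
      proof
        assume v: "v \<in> ?A"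
        then have "X (Suc k) \<le> v" using next_x_value_le[OF X kn] by blast
        then show "v \<in> insert (X (Suc k)) ?C" using v by auto
      next
        assume "v \<in> insert (X (Suc k)) ?C"
        moreover have "X (Suc k) \<in> ?V" using kn by auto
        ultimately show "v \<in> ?A" using jump less by auto
      qed
    qed
    then show ?thesis using False by simp
  qed
  have "height (steps_of n X) (Suc k) =
      int (card ?A) + (of_bool (Suc k \<in> ?V) - of_bool (X (Suc k) \<noteq> X k))"
    using step Suc kn nth_steps_of[OF kn] by simp
  then show ?case using A B by (simp only: of_nat_add of_nat_of_bool)
qed

lemma sum_steps_of:
  assumes X: "x_sequence n X"
  shows "sum_list (steps_of n X) = 0"
proof -
  have "sum_list (steps_of n X) = int (card {v \<in> X`{1..n}. X n < v \<and> v \<le> n})"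
    using height_steps_of[OF X, of n] by simp
  also have "{v \<in> X`{1..n}. X n < v \<and> v \<le> n} = {}"
    using x_sequence_mono[OF X] by fastforce
  finally show ?thesis by simp
qed

lemma motzkin_path_steps_of:
  assumes X: "x_sequence n X"
  shows "motzkin_path n (steps_of n X)"
proof -
  have "set (steps_of n X) \<subseteq> {-1,0,1}"
    unfolding steps_of_def by (auto simp: of_bool_def split: if_splits)
  moreover have "\<forall>i\<le>n. height (steps_of n X) i \<ge> 0"
    using height_steps_of[OF X] by simp
  ultimately show ?thesis unfolding motzkin_path_def using sum_steps_of[OF X] by simp
qed

lemma height_steps_of_eq_0_iff:
  assumes X: "x_sequence n X" and kn: "k \<le> n"
  shows "height (steps_of n X) k = 0 \<longleftrightarrow> (\<forall>j\<in>{1..n}. X j \<le> X k \<or> k < X j)"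
proof -
  have "height (steps_of n X) k = 0 \<longleftrightarrow> {v \<in> X`{1..n}. X k < v \<and> v \<le> k} = {}"
    using height_steps_of[OF X kn] by simp
  then show ?thesis by (auto simp: not_less)
qed

text \<open>A jump together with a new value \<open>k\<close> forces positive height, since \<open>k\<close> itself is
  counted; neither of the two forces height zero by admissibility.\<close>

lemma steps_of_classify:
  assumes X: "x_sequence n X" and adm: "admissible n X" and k: "1 \<le> k" "k \<le> n"
  shows "X k \<noteq> X (k-1) \<longleftrightarrow> is_jump (steps_of n X) k"
    and "k \<in> X`{1..n} \<longleftrightarrow> is_value (steps_of n X) k"
proof -
  let ?s = "steps_of n X"
  have step: "?s ! (k-1) = of_bool (k \<in> X`{1..n}) - of_bool (X k \<noteq> X (k-1))"
    using nth_steps_of'[OF k] .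
  have both: "height ?s k \<ge> 1" if "k \<in> X`{1..n}" "X k \<noteq> X (k-1)"
  proof -
    have "k \<in> {v \<in> X`{1..n}. X k < v \<and> v \<le> k}"
      using that x_sequence_less[OF X k] by simp
    then have "card {v \<in> X`{1..n}. X k < v \<and> v \<le> k} > 0" by (auto simp: card_gt_0_iff)
    then show ?thesis using height_steps_of[OF X k(2)] by linarith
  qed
  have neither: "height ?s k = 0" if "k \<notin> X`{1..n}" "X k = X (k-1)"
    using adm that k unfolding admissible_def by auto
  show "X k \<noteq> X (k-1) \<longleftrightarrow> is_jump ?s k" and "k \<in> X`{1..n} \<longleftrightarrow> is_value ?s k"
    unfolding is_jump_def is_value_def using step both neither
    by (cases "k \<in> X`{1..n}"; cases "X k = X (k-1)"; simp)+
qed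

lemma x_sequence_eqI:
  assumes X: "x_sequence n X" and Y: "x_sequence n Y"
    and jump: "\<And>k. 1 \<le> k \<Longrightarrow> k \<le> n \<Longrightarrow> X k \<noteq> X (k-1) \<longleftrightarrow> Y k \<noteq> Y (k-1)"
    and vals: "\<And>k. 1 \<le> k \<Longrightarrow> k \<le> n \<Longrightarrow> k \<in> X`{1..n} \<longleftrightarrow> k \<in> Y`{1..n}"
    and kn: "k \<le> n"
  shows "X k = Y k"
proof -
  have sub: "A`{1..n} \<subseteq> B`{1..n}"
    if A: "x_sequence n A" and B: "x_sequence n B"
      and AB: "\<And>k. 1 \<le> k \<Longrightarrow> k \<le> n \<Longrightarrow> k \<in> A`{1..n} \<longleftrightarrow> k \<in> B`{1..n}" for A B
  proof
    fix v assume v: "v \<in> A`{1..n}"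
    have "v < n" using x_value_less[OF A v] .
    then show "v \<in> B`{1..n}"
      using zero_x_value[OF B] AB[of v] v by (cases "v = 0") auto
  qed
  have same_values: "X`{1..n} = Y`{1..n}" using sub[OF X Y] sub[OF Y X] vals by blast
  show ?thesis
    using kn
  proof (induction k)
    case 0
    then show ?case using x_sequence_0[OF X] x_sequence_0[OF Y] by simp
  next
    case (Suc k)
    have kn: "k < n" using Suc by simp
    have IH: "X k = Y k" using Suc by simp
    show ?case
    proof (cases "X (Suc k) = X k")
      case True
      then show ?thesis using jump[of "Suc k"] kn IH by simp
    next
      case False
      then have "Y (Suc k) \<noteq> Y k" using jump[of "Suc k"] kn by simp
      then have "X k < X (Suc k)" "Y k < Y (Suc k)"
        using False x_sequence_mono[OF X, of k "Suc k"] x_sequence_mono[OF Y, of k "Suc k"] kn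
        by auto
      moreover have "X (Suc k) \<in> Y`{1..n}" "Y (Suc k) \<in> X`{1..n}"
        using same_values kn by auto
      ultimately show ?thesis
        using next_x_value_le[OF X kn] next_x_value_le[OF Y kn] IH by (metis le_antisym)
    qed
  qed
qed

lemma steps_of_inj:
  assumes X: "x_sequence n X" and Y: "x_sequence n Y"
    and adm: "admissible n X" "admissible n Y" and eq: "steps_of n X = steps_of n Y"
    and kn: "k \<le> n"
  shows "X k = Y k"
  using X Y _ _ kn
proof (rule x_sequence_eqI)
  fix k assume k: "1 \<le> k" "k \<le> n"
  show "X k \<noteq> X (k-1) \<longleftrightarrow> Y k \<noteq> Y (k-1)"
    using steps_of_classify(1)[OF X adm(1) k] steps_of_classify(1)[OF Y adm(2) k] eq by simp
  show "k \<in> X`{1..n} \<longleftrightarrow> k \<in> Y`{1..n}"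
    using steps_of_classify(2)[OF X adm(1) k] steps_of_classify(2)[OF Y adm(2) k] eq by simp
qed

lemma riordan_path_steps_of_iff:
  assumes X: "x_sequence n X" and adm: "admissible n X"
  shows "riordan_path n (steps_of n X) \<longleftrightarrow>
    (\<forall>k\<in>{1..n}. X k = X (k-1) \<longrightarrow> k < n \<and> k \<in> X`{1..n})"
proof -
  let ?s = "steps_of n X"
  have height_pred: "height ?s (k-1) = height ?s k - ?s ! (k-1)" if "1 \<le> k" "k \<le> n" for k
  proof -
    have "take k ?s = take (k-1) ?s @ [?s ! (k-1)]"
      using that take_Suc_conv_app_nth[of "k-1" ?s] by simp
    then show ?thesis by simp
  qed
  show ?thesis
  proof
    assume r: "riordan_path n ?s"
    show "\<forall>k\<in>{1..n}. X k = X (k-1) \<longrightarrow> k < n \<and> k \<in> X`{1..n}"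
    proof (intro ballI impI)
      fix k assume "k \<in> {1..n}" and level: "X k = X (k-1)"
      then have k: "1 \<le> k" "k \<le> n" by auto
      have kV: "k \<in> X`{1..n}"
      proof (rule ccontr)
        assume nv: "k \<notin> X`{1..n}"
        have s0: "?s ! (k-1) = 0" using nth_steps_of'[OF k, of X] nv level by simp
        have "height ?s k = 0" using adm k level nv unfolding admissible_def by auto
        then have "height ?s (k-1) = 0" using height_pred[OF k] s0 by simp
        moreover have "k - 1 < n" using k by simp
        ultimately show False using r s0 unfolding riordan_path_def by blast
      qed
      then show "k < n \<and> k \<in> X`{1..n}" using x_value_less[OF X kV] by simp
    qed
  next
    assume h: "\<forall>k\<in>{1..n}. X k = X (k-1) \<longrightarrow> k < n \<and> k \<in> X`{1..n}"
    have "height ?s i \<noteq> 0" if i: "i < n" and s0: "?s ! i = 0" for i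
    proof
      assume H0: "height ?s i = 0"
      have k: "1 \<le> Suc i" "Suc i \<le> n" using i by auto
      have "height ?s (Suc i) = 0" using height_pred[OF k] s0 H0 by simp
      then show False
        using h nth_steps_of[OF i, of X] steps_of_classify(1)[OF X adm k] s0 k
        unfolding is_jump_def by (cases "X (Suc i) = X i") auto
    qed
    then show "riordan_path n ?s"
      unfolding riordan_path_def using motzkin_path_steps_of[OF X] by simp
  qed
qed

lemma card_atLeastAtMost_Suc_filter:
  "card {i\<in>{1..Suc k}. P i} = card {i\<in>{1..k}. P i} + of_bool (P (Suc k))"
proof -
  have "{i\<in>{1..Suc k}. P i} = {i\<in>{1..k}. P i} \<union> (if P (Suc k) then {Suc k} else {})"
    by (auto simp: le_Suc_eq)
  then show ?thesis by (simp add: card_Un_disjoint)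
qed

section \<open>Recovering an x-sequence from a Motzkin path\<close>

text \<open>The value set is \<open>0\<close> together with the letters read as values, and \<open>X k\<close> is the
  element of the value set whose rank is the number of jumps up to \<open>k\<close>.\<close>

definition value_set :: "nat \<Rightarrow> int list \<Rightarrow> nat set" where
  "value_set n s = insert 0 {k\<in>{1..n}. is_value s k}"

definition jump_count :: "int list \<Rightarrow> nat \<Rightarrow> nat" where
  "jump_count s k = card {i\<in>{1..k}. is_jump s i}"

definition value_count :: "int list \<Rightarrow> nat \<Rightarrow> nat" where
  "value_count s k = card {i\<in>{1..k}. is_value s i}"

definition x_sequence_of :: "nat \<Rightarrow> int list \<Rightarrow> nat \<Rightarrow> nat" where
  "x_sequence_of n s k =
     (if k \<le> n then sorted_list_of_set (value_set n s) ! jump_count s k else 0)"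

lemma jump_count_Suc: "jump_count s (Suc k) = jump_count s k + of_bool (is_jump s (Suc k))"
  unfolding jump_count_def by (rule card_atLeastAtMost_Suc_filter)

lemma value_count_Suc: "value_count s (Suc k) = value_count s k + of_bool (is_value s (Suc k))"
  unfolding value_count_def by (rule card_atLeastAtMost_Suc_filter)

lemma jump_count_mono: "j \<le> k \<Longrightarrow> jump_count s j \<le> jump_count s k"
  unfolding jump_count_def by (rule card_mono) auto

lemma value_count_mono: "j \<le> k \<Longrightarrow> value_count s j \<le> value_count s k"
  unfolding value_count_def by (rule card_mono) auto

lemma x_sequence_of_beyond: "n < k \<Longrightarrow> x_sequence_of n s k = 0"
  unfolding x_sequence_of_def by simp

context
  fixes n :: nat and s :: "int list"
  assumes motzkin: "motzkin_path n s" and n_pos: "1 \<le> n"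
begin

lemma length_motzkin: "length s = n" using motzkin unfolding motzkin_path_def by simp

lemma step_range: "1 \<le> k \<Longrightarrow> k \<le> n \<Longrightarrow> s!(k-1) \<in> {-1,0,1}"
proof -
  assume k: "1 \<le> k" "k \<le> n"
  have "s!(k-1) \<in> set s" using k length_motzkin by (intro nth_mem) simp
  then show ?thesis using motzkin unfolding motzkin_path_def by blast
qed

lemma height_last_step:
  "1 \<le> k \<Longrightarrow> k \<le> n \<Longrightarrow> height s k = height s (k-1) + s!(k-1)"
proof -
  assume k: "1 \<le> k" "k \<le> n"
  have "take k s = take (k-1) s @ [s!(k-1)]"
    using k length_motzkin take_Suc_conv_app_nth[of "k-1" s] by simp
  then show ?thesis by simp
qed

lemma height_nonneg: "k \<le> n \<Longrightarrow> height s k \<ge> 0"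
  using motzkin unfolding motzkin_path_def by simp

lemma height_final: "height s n = 0"
  using motzkin length_motzkin unfolding motzkin_path_def by simp

lemma step_eq_of_bool:
  "1 \<le> k \<Longrightarrow> k \<le> n \<Longrightarrow> s!(k-1) = of_bool (is_value s k) - of_bool (is_jump s k)"
  using step_range unfolding is_value_def is_jump_def by auto

lemma height_pos_if_value:
  "1 \<le> k \<Longrightarrow> k \<le> n \<Longrightarrow> is_value s k \<Longrightarrow> height s k \<ge> 1"
  using height_last_step height_nonneg[of "k-1"] unfolding is_value_def by auto

lemma not_is_jump_1: "\<not> is_jump s 1"
proof
  assume j: "is_jump s 1"
  have "height s 1 = s!0" using height_last_step[of 1] n_pos by simp
  moreover have "height s 1 \<ge> 0" using height_nonneg[of 1] n_pos by simp
  ultimately show False using j unfolding is_jump_def by auto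
qed

lemma height_eq_counts:
  "k \<le> n \<Longrightarrow> height s k = int (value_count s k) - int (jump_count s k)"
proof (induction k)
  case 0 then show ?case by (simp add: value_count_def jump_count_def)
next
  case (Suc k)
  have "height s (Suc k) = height s k + s!k" using height_last_step[of "Suc k"] Suc by simp
  also have "s!k = of_bool (is_value s (Suc k)) - of_bool (is_jump s (Suc k))"
    using step_eq_of_bool[of "Suc k"] Suc by simp
  finally show ?case using Suc jump_count_Suc[of s k] value_count_Suc[of s k] by simp
qed

text \<open>The height after \<open>k\<close> letters is at least \<open>[is_value s k]\<close>; this is what keeps
  \<open>X k < k\<close>.\<close>

lemma jump_count_le_value_count:
  "1 \<le> k \<Longrightarrow> k \<le> n \<Longrightarrow> jump_count s k \<le> value_count s (k-1)"
proof -
  assume k: "1 \<le> k" "k \<le> n"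
  have c: "value_count s k = value_count s (k-1) + of_bool (is_value s k)"
    using value_count_Suc[of s "k-1"] k by simp
  have "of_bool (is_value s k) \<le> height s k"
    using height_pos_if_value[OF k] height_nonneg[OF k(2)] by (cases "is_value s k") auto
  then show ?thesis using height_eq_counts[OF k(2)] c by simp
qed

lemma jump_count_final:
  "jump_count s n = value_count s n" using height_eq_counts[of n] height_final by simp

lemma finite_value_set: "finite (value_set n s)" unfolding value_set_def by simp

lemma card_value_set: "card (value_set n s) = Suc (value_count s n)"
  unfolding value_set_def value_count_def by simp

lemma card_value_set_less:
  "1 \<le> k \<Longrightarrow> k \<le> Suc n \<Longrightarrow> card {a \<in> value_set n s. a < k} = Suc (value_count s (k-1))"
proof -
  assume k: "1 \<le> k" "k \<le> Suc n"
  have "{a \<in> value_set n s. a < k} = insert 0 {i\<in>{1..k-1}. is_value s i}"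
    unfolding value_set_def using k by auto
  then show ?thesis unfolding value_count_def by simp
qed

abbreviation "value_list \<equiv> sorted_list_of_set (value_set n s)"

lemma sorted_values: "sorted_wrt (<) value_list" using finite_value_set by simp
lemma set_values: "set value_list = value_set n s" using finite_value_set by simp
lemma length_values:
  "length value_list = Suc (value_count s n)" using finite_value_set card_value_set by simp

lemma jump_count_less: assumes kn: "k \<le> n" shows "jump_count s k < length value_list"
proof (cases "k = 0")
  case True then show ?thesis using length_values by (simp add: jump_count_def)
next
  case False
  then have "jump_count s k \<le> value_count s (k-1)"
    using jump_count_le_value_count[of k] kn by simp
  also have "\<dots> \<le> value_count s n" using value_count_mono[of "k-1" n] kn by simp
  finally show ?thesis using length_values by simp
qed

lemma x_sequence_of_less:
  "1 \<le> k \<Longrightarrow> k \<le> n \<Longrightarrow> x_sequence_of n s k < k"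
proof -
  assume k: "1 \<le> k" "k \<le> n"
  have "jump_count s k < card {a \<in> set value_list. a < k}"
    using jump_count_le_value_count[OF k] card_value_set_less[of k] k set_values by simp
  then show ?thesis unfolding x_sequence_of_def
    using nth_less_iff_card_less[OF sorted_values jump_count_less[OF k(2)]] k by simp
qed

lemma x_sequence_of_mono:
  "j \<le> k \<Longrightarrow> k \<le> n \<Longrightarrow> x_sequence_of n s j \<le> x_sequence_of n s k"
  unfolding x_sequence_of_def using sorted_nth_mono[OF strict_sorted_imp_sorted[OF sorted_values] jump_count_mono[of j k] jump_count_less[of k]]
  by simp

lemma x_sequence_of_0: "x_sequence_of n s 0 = 0"
proof -
  have "0 \<in> set value_list" using set_values value_set_def by simp
  then obtain i where i: "i < length value_list" "value_list!i = 0" by (auto simp: in_set_conv_nth)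
  have "value_list!0 \<le> value_list!i" using sorted_nth_mono[OF strict_sorted_imp_sorted[OF sorted_values], of 0 i] i
    by simp
  then show ?thesis unfolding x_sequence_of_def jump_count_def using i by simp
qed

lemma x_sequence_x_sequence_of: "x_sequence n (x_sequence_of n s)"
  unfolding x_sequence_def using x_sequence_of_0 x_sequence_of_less x_sequence_of_mono by auto

lemma jump_count_attains:
  "m \<le> jump_count s k \<Longrightarrow> 1 \<le> k \<Longrightarrow> \<exists>i\<in>{1..k}. jump_count s i = m"
proof (induction k)
  case 0 then show ?case by simp
next
  case (Suc k)
  show ?case
  proof (cases "m \<le> jump_count s k \<and> 1 \<le> k")
    case True then show ?thesis using Suc.IH by force
  next
    case False
    show ?thesis
    proof (cases "k = 0")
      case True
      then have "jump_count s (Suc k) = 0"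
        using not_is_jump_1 jump_count_Suc[of s 0] by (simp add: jump_count_def)
      then show ?thesis using Suc.prems True by auto
    next
      case False2: False
      then have "jump_count s k < m" using False by simp
      then have "jump_count s (Suc k) = m"
        using Suc.prems jump_count_Suc[of s k] by (cases "is_jump s (Suc k)") auto
      then show ?thesis by auto
    qed
  qed
qed

lemma image_x_sequence_of: "x_sequence_of n s ` {1..n} = value_set n s"
proof
  show "x_sequence_of n s ` {1..n} \<subseteq> value_set n s"
    unfolding x_sequence_of_def using jump_count_less set_values by (auto intro: nth_mem)
next
  show "value_set n s \<subseteq> x_sequence_of n s ` {1..n}"
  proof
    fix v assume "v \<in> value_set n s"
    then obtain m where m: "m < length value_list" "v = value_list!m"
      using set_values by (metis in_set_conv_nth)
    then have "m \<le> jump_count s n" using length_values jump_count_final by simp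
    then obtain i where i: "i \<in> {1..n}" "jump_count s i = m"
      using jump_count_attains[of m n] n_pos by auto
    then show "v \<in> x_sequence_of n s ` {1..n}" unfolding x_sequence_of_def using m by force
  qed
qed

lemma x_sequence_of_jump_iff:
  "1 \<le> k \<Longrightarrow> k \<le> n \<Longrightarrow> (x_sequence_of n s k \<noteq> x_sequence_of n s (k-1)) \<longleftrightarrow> is_jump s k"
proof -
  assume k: "1 \<le> k" "k \<le> n"
  have J: "jump_count s k = jump_count s (k-1) + of_bool (is_jump s k)"
    using jump_count_Suc[of s "k-1"] k by simp
  have d: "distinct value_list" using sorted_values strict_sorted_iff by blast
  have l1: "jump_count s k < length value_list" "jump_count s (k-1) < length value_list"
    using jump_count_less k by auto
  have "(value_list ! jump_count s k \<noteq> value_list ! jump_count s (k-1)) \<longleftrightarrow> jump_count s k \<noteq> jump_count s (k-1)"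
    using nth_eq_iff_index_eq[OF d l1] by simp
  moreover have "x_sequence_of n s k = value_list ! jump_count s k" "x_sequence_of n s (k-1) = value_list ! jump_count s (k-1)" unfolding x_sequence_of_def
    using k by auto
  ultimately show ?thesis using J by simp
qed

lemma steps_of_x_sequence_of: "steps_of n (x_sequence_of n s) = s"
proof (rule nth_equalityI)
  show "length (steps_of n (x_sequence_of n s)) = length s" using length_motzkin by simp
next
  fix i assume "i < length (steps_of n (x_sequence_of n s))"
  then have i: "i < n" by simp
  have k: "1 \<le> Suc i" "Suc i \<le> n" using i by auto
  have "steps_of n (x_sequence_of n s) ! i = of_bool (Suc i \<in> value_set n s) - of_bool (is_jump s (Suc i))"
    using nth_steps_of[OF i, of "x_sequence_of n s"] image_x_sequence_of x_sequence_of_jump_iff[OF k]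
      by simp
  also have "Suc i \<in> value_set n s \<longleftrightarrow> is_value s (Suc i)" unfolding value_set_def
    using i by auto
  finally show "steps_of n (x_sequence_of n s) ! i = s ! i" using step_eq_of_bool[OF k] by simp
qed

lemma admissible_x_sequence_of: "admissible n (x_sequence_of n s)"
  unfolding admissible_def
proof (intro ballI impI)
  fix k assume "k \<in> {1..n}" and level: "x_sequence_of n s k = x_sequence_of n s (k-1)"
    and nv: "k \<notin> x_sequence_of n s ` {1..n}"
  then have k: "1 \<le> k" "k \<le> n" by auto
  have "\<not> is_jump s k" using x_sequence_of_jump_iff[OF k] level by simp
  moreover have "\<not> is_value s k" using nv image_x_sequence_of k unfolding value_set_def by auto
  ultimately have "s!(k-1) = 0" using step_eq_of_bool[OF k] by simp
  then have "height s k = 0" using \<open>\<not> is_value s k\<close> height_nonneg[OF k(2)]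
    unfolding is_value_def by simp
  then show "height (steps_of n (x_sequence_of n s)) k = 0" using steps_of_x_sequence_of by simp
qed

end

section \<open>Dyck paths and x-sequences\<close>

lemma nth_north_idx:
  assumes "j < length (filter id p)"
  shows "north_idx p ! j < length p" "p!(north_idx p ! j)" "length (filter id (take (north_idx p ! j) p)) = j"
  using filter_index_nth[of j id p] assms length_filter_index[of id p]
    unfolding north_idx_def by auto

lemma nth_east_idx:
  assumes "j < length (filter Not p)"
  shows "east_idx p ! j < length p" "\<not> p!(east_idx p ! j)" "length (filter Not (take (east_idx p ! j) p)) = j"
  using filter_index_nth[of j Not p] assms length_filter_index[of Not p]
    unfolding east_idx_def by auto

lemma length_north_idx: "length (north_idx p) = length (filter id p)"
  unfolding north_idx_def using length_filter_index[of id p] by simp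

text \<open>\<open>xseq\<close> is normalised to \<open>0\<close> outside \<open>{1..n}\<close>, so that \<open>xseq\<close> inverts
  \<open>path_of\<close> as an equation of functions.\<close>

definition xseq :: "nat \<Rightarrow> bool list \<Rightarrow> nat \<Rightarrow> nat" where
  "xseq n p k = (if k = 0 \<or> n < k then 0 else xcoord p k)"

text \<open>The \<open>k\<close>-th north step is preceded by \<open>X k\<close> east and \<open>k - 1\<close> north steps,
  so it is the letter at (0-based) position \<open>X k + k - 1\<close>.\<close>

definition path_of :: "nat \<Rightarrow> (nat \<Rightarrow> nat) \<Rightarrow> bool list" where
  "path_of n X = map (\<lambda>i. \<exists>k\<in>{1..n}. i = X k + k - 1) [0..<2*n]"

lemma north_idx_xcoord:
  assumes k: "1 \<le> k" "k \<le> length (filter id p)"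
  shows "north_idx p ! (k-1) = xcoord p k + (k - 1)"
proof -
  let ?i = "north_idx p ! (k-1)"
  have j: "k - 1 < length (filter id p)" using k by simp
  have "length (filter id (take ?i p)) + length (filter Not (take ?i p)) = ?i"
    using length_filter_id_Not_take[of ?i p] nth_north_idx(1)[OF j] by simp
  then show ?thesis using nth_north_idx(3)[OF j] unfolding xcoord_def by simp
qed

lemma north_idx_xseq:
  assumes p: "dyck_path n p" and k: "1 \<le> k" "k \<le> n"
  shows "north_idx p ! (k-1) = xseq n p k + (k-1)"
  using north_idx_xcoord[of k p] k p unfolding xseq_def dyck_path_def by simp

lemma path_of_xseq:
  assumes p: "dyck_path n p"
  shows "path_of n (xseq n p) = p"
proof (rule nth_equalityI)
  have length: "length p = 2*n" and north: "length (filter id p) = n"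
    using p unfolding dyck_path_def by auto
  then show "length (path_of n (xseq n p)) = length p" by (simp add: path_of_def)
  fix i assume "i < length (path_of n (xseq n p))"
  then have i: "i < length p" using length by (simp add: path_of_def)
  have "p!i \<longleftrightarrow> i \<in> set (north_idx p)" unfolding north_idx_def using i by simp
  also have "\<dots> \<longleftrightarrow> (\<exists>j<n. i = north_idx p ! j)"
    using length_north_idx[of p] north by (auto simp: in_set_conv_nth)
  also have "\<dots> \<longleftrightarrow> (\<exists>k\<in>{1..n}. i = xseq n p k + k - 1)"
  proof
    assume "\<exists>j<n. i = north_idx p ! j"
    then obtain j where "j < n" "i = north_idx p ! j" by auto
    then show "\<exists>k\<in>{1..n}. i = xseq n p k + k - 1"
      using north_idx_xseq[OF p, of "Suc j"] by (intro bexI[of _ "Suc j"]) auto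
  next
    assume "\<exists>k\<in>{1..n}. i = xseq n p k + k - 1"
    then obtain k where "k \<in> {1..n}" "i = xseq n p k + k - 1" by auto
    then show "\<exists>j<n. i = north_idx p ! j"
      using north_idx_xseq[OF p, of k] by (intro exI[of _ "k-1"]) auto
  qed
  finally show "path_of n (xseq n p) ! i = p!i" using i length by (simp add: path_of_def)
qed

lemma x_sequence_xseq:
  assumes p: "dyck_path n p"
  shows "x_sequence n (xseq n p)"
  unfolding x_sequence_def
proof (intro conjI allI impI)
  show "xseq n p 0 = 0" by (simp add: xseq_def)
next
  fix k assume k: "1 \<le> k" "k \<le> n"
  have j: "k - 1 < length (filter id p)" using k p unfolding dyck_path_def by simp
  have "length (filter Not (take (north_idx p ! (k-1)) p))
      \<le> length (filter id (take (north_idx p ! (k-1)) p))"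
    using p nth_north_idx(1)[OF j] unfolding dyck_path_def by simp
  then show "xseq n p k < k" using nth_north_idx(3)[OF j] k unfolding xseq_def xcoord_def by simp
next
  fix j k assume jk: "j \<le> k" "k \<le> n"
  show "xseq n p j \<le> xseq n p k"
  proof (cases "j = 0")
    case True
    then show ?thesis by (simp add: xseq_def)
  next
    case False
    have "sorted_wrt (<) (north_idx p)" unfolding north_idx_def by (rule sorted_wrt_filter) simp
    then have "north_idx p ! (j-1) \<le> north_idx p ! (k-1)"
      using sorted_nth_mono[OF strict_sorted_imp_sorted, of "north_idx p" "j-1" "k-1"] jk False
        length_north_idx[of p] p unfolding dyck_path_def by simp
    then have "length (filter Not (take (north_idx p ! (j-1)) p))
        \<le> length (filter Not (take (north_idx p ! (k-1)) p))"
      by (rule length_filter_take_mono)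
    then show ?thesis using jk False unfolding xseq_def xcoord_def by simp
  qed
qed

context
  fixes n :: nat and X :: "nat \<Rightarrow> nat"
  assumes X: "x_sequence n X"
begin

abbreviation "path \<equiv> path_of n X"

lemma north_pos_less:
  "1 \<le> j \<Longrightarrow> j < k \<Longrightarrow> k \<le> n \<Longrightarrow> X j + j - 1 < X k + k - 1"
  using x_sequence_mono[OF X, of j k] by simp

lemma north_pos_less_iff:
  "1 \<le> j \<Longrightarrow> j \<le> n \<Longrightarrow> 1 \<le> k \<Longrightarrow> k \<le> n \<Longrightarrow> X j + j - 1 < X k + k - 1 \<longleftrightarrow> j < k"
  using north_pos_less[of j k] north_pos_less[of k j] by (cases "j < k"; cases "k < j") auto

lemma inj_on_north_pos: "inj_on (\<lambda>k. X k + k - 1) {1..n}"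
  unfolding inj_on_def using north_pos_less_iff
    by (metis atLeastAtMost_iff less_irrefl_nat nat_neq_iff)

lemma north_pos_less_Suc_iff:
  "1 \<le> k \<Longrightarrow> k \<le> n \<Longrightarrow> 1 \<le> j \<Longrightarrow> j \<le> n \<Longrightarrow> X k + k - 1 < X j + j \<longleftrightarrow> k \<le> j"
proof -
  assume a: "1 \<le> k" "k \<le> n" "1 \<le> j" "j \<le> n"
  have "X k + k - 1 < X j + j \<longleftrightarrow> \<not> (X j + j - 1 < X k + k - 1)"
    using a by linarith
  also have "\<dots> \<longleftrightarrow> \<not> (j < k)"
    using north_pos_less_iff[of j k] a by simp
  finally show ?thesis by (simp add: not_less)
qed

lemma north_pos_below:
  "1 \<le> j \<Longrightarrow> j \<le> n \<Longrightarrow> {k\<in>{1..n}. X k + k - 1 < X j + j} = {1..j}"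
proof (rule set_eqI)
  fix k assume j: "1 \<le> j" "j \<le> n"
  show "k \<in> {k\<in>{1..n}. X k + k - 1 < X j + j} \<longleftrightarrow> k \<in> {1..j}"
  proof (cases "1 \<le> k \<and> k \<le> n")
    case True then show ?thesis using north_pos_less_Suc_iff[of k j] j by auto
  next
    case False then show ?thesis using j by auto
  qed
qed

lemma north_pos_bound: "1 \<le> k \<Longrightarrow> k \<le> n \<Longrightarrow> X k + k - 1 < 2*n"
  using x_sequence_less[OF X, of k] by simp

lemma length_path_of[simp]: "length path = 2*n" by (simp add: path_of_def)

lemma nth_path_of:
  "i < 2*n \<Longrightarrow> path ! i \<longleftrightarrow> (\<exists>k\<in>{1..n}. i = X k + k - 1)"
  by (simp add: path_of_def)

lemma count_north_take: "length (filter id (take m path)) = card {k\<in>{1..n}. X k + k - 1 < m}"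
proof -
  have "length (filter id (take m path)) = card {i. i < m \<and> i < length path \<and> id (path!i)}"
    by (rule length_filter_take)
  also have "{i. i < m \<and> i < length path \<and> id (path!i)} = (\<lambda>k. X k + k - 1) ` {k\<in>{1..n}. X k + k - 1 < m}"
  proof (rule set_eqI)
    fix i
    show "i \<in> {i. i < m \<and> i < length path \<and> id (path!i)} \<longleftrightarrow> i \<in> (\<lambda>k. X k + k - 1) ` {k\<in>{1..n}. X k + k - 1 < m}"
    proof
      assume "i \<in> {i. i < m \<and> i < length path \<and> id (path!i)}"
      then obtain k where "k \<in> {1..n}" "i = X k + k - 1" "i < m" using nth_path_of by auto
      then show "i \<in> (\<lambda>k. X k + k - 1) ` {k\<in>{1..n}. X k + k - 1 < m}" by auto
    next
      assume "i \<in> (\<lambda>k. X k + k - 1) ` {k\<in>{1..n}. X k + k - 1 < m}"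
      then obtain k where k: "k \<in> {1..n}" "i = X k + k - 1" "i < m" by auto
      then have "i < 2*n" using north_pos_bound[of k] by simp
      then show "i \<in> {i. i < m \<and> i < length path \<and> id (path!i)}"
        using k nth_path_of[of i] by auto
    qed
  qed
  also have "card \<dots> = card {k\<in>{1..n}. X k + k - 1 < m}"
    by (rule card_image) (rule inj_on_subset[OF inj_on_north_pos], auto)
  finally show ?thesis .
qed

lemma card_north_pos_less:
  "1 \<le> j \<Longrightarrow> j \<le> n \<Longrightarrow> card {k\<in>{1..n}. X k + k - 1 < X j + j - 1} = j - 1"
proof -
  assume j: "1 \<le> j" "j \<le> n"
  have "{k\<in>{1..n}. X k + k - 1 < X j + j - 1} = {1..j-1}"
    using north_pos_less_iff[of _ j] j by auto
  then show ?thesis by simp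
qed

lemma count_north_path_of: "length (filter id path) = n"
proof -
  have "length (filter id path) = length (filter id (take (2*n) path))" by simp
  also have "\<dots> = card {k\<in>{1..n}. X k + k - 1 < 2*n}" by (rule count_north_take)
  also have "{k\<in>{1..n}. X k + k - 1 < 2*n} = {1..n}" using north_pos_bound by auto
  finally show ?thesis by (simp add: id_def)
qed

lemma north_idx_path_of:
  "1 \<le> k \<Longrightarrow> k \<le> n \<Longrightarrow> north_idx path ! (k-1) = X k + k - 1"
proof -
  assume k: "1 \<le> k" "k \<le> n"
  have j: "k-1 < length (filter id path)" using count_north_path_of k by simp
  note np = nth_north_idx[OF j]
  obtain j where jj: "j \<in> {1..n}" "north_idx path ! (k-1) = X j + j - 1"
    using np(1,2) nth_path_of by auto
  have "j - 1 = k - 1" using np(3) jj count_north_take card_north_pos_less[of j] by simp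
  moreover have "1 \<le> j" using jj by simp
  ultimately have "j = k" using k by linarith
  then show ?thesis using jj by simp
qed

lemma xcoord_path_of: "1 \<le> k \<Longrightarrow> k \<le> n \<Longrightarrow> xcoord path k = X k"
  using north_idx_xcoord[of k path] count_north_path_of north_idx_path_of[of k] by simp

text \<open>Since \<open>X k + k - 1 < 2 k - 1\<close>, the first \<open>i\<close> letters contain the north steps
  \<open>1, \<dots>, min n \<lceil>i/2\<rceil>\<close>.\<close>

lemma dyck_path_path_of: "dyck_path n path"
  unfolding dyck_path_def
proof (intro conjI allI impI)
  show "length path = 2*n" by simp
  show "length (filter id path) = n" by (rule count_north_path_of)
next
  fix i assume i: "i \<le> length path"
  define c where "c = length (filter id (take i path))"
  have sum: "c + length (filter Not (take i path)) = i"
    using length_filter_id_Not_take[of i path] i c_def by simp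
  have cle: "c \<le> n"
  proof -
    have "c \<le> length (filter id (take (2*n) path))"
      using i c_def length_filter_take_mono[of i "2*n" id path] by simp
    then show ?thesis using count_north_path_of by simp
  qed
  define m where "m = min n ((i+1) div 2)"
  have "{1..m} \<subseteq> {k\<in>{1..n}. X k + k - 1 < i}"
  proof
    fix k assume k: "k \<in> {1..m}"
    then have "X k < k" using x_sequence_less[OF X, of k] m_def by simp
    then show "k \<in> {k\<in>{1..n}. X k + k - 1 < i}" using k m_def by auto
  qed
  then have "m \<le> c" unfolding c_def count_north_take
    using card_mono[of "{k\<in>{1..n}. X k + k - 1 < i}" "{1..m}"] by simp
  moreover have "i \<le> 2 * ((i+1) div 2)" by presburger
  moreover have "i \<le> 2 * n" using i by simp
  ultimately show "length (filter Not (take i path)) \<le> length (filter id (take i path))"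
    using sum cle unfolding m_def c_def[symmetric]
      by (cases "n \<le> (i+1) div 2") (simp_all add: min_def)
qed

lemma count_east_path_of: "length (filter Not path) = n"
  using length_filter_id_Not_take[of "2*n" path] count_north_path_of by simp

lemma count_east_before_north:
  "1 \<le> j \<Longrightarrow> j \<le> n \<Longrightarrow> length (filter Not (take (X j + j - 1) path)) = X j"
  using xcoord_path_of[of j] north_idx_path_of[of j] unfolding xcoord_def by simp

lemma ycoord_path_of:
  "1 \<le> k \<Longrightarrow> k \<le> n \<Longrightarrow> ycoord path k = card {j\<in>{1..n}. X j < k}"
proof -
  assume k: "1 \<le> k" "k \<le> n"
  define Q where "Q = east_idx path ! (k-1)"
  have j: "k-1 < length (filter Not path)" using count_east_path_of k by simp
  note ep = nth_east_idx[OF j, folded Q_def]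
  have "ycoord path k = length (filter id (take Q path))" unfolding ycoord_def Q_def by simp
  also have "\<dots> = card {j\<in>{1..n}. X j + j - 1 < Q}" by (rule count_north_take)
  also have "{j\<in>{1..n}. X j + j - 1 < Q} = {j\<in>{1..n}. X j < k}"
  proof (rule Collect_cong)
    fix j
    show "(j \<in> {1..n} \<and> X j + j - 1 < Q) \<longleftrightarrow> (j \<in> {1..n} \<and> X j < k)"
    proof (cases "j \<in> {1..n}")
      case True
      have ne: "X j + j - 1 \<noteq> Q" using ep(2) nth_path_of[of Q] ep(1) True by auto
      show ?thesis
      proof
        assume "j \<in> {1..n} \<and> X j + j - 1 < Q"
        then have "length (filter Not (take (X j + j - 1) path)) \<le> length (filter Not (take Q path))"
          by (intro length_filter_take_mono) simp
        then show "j \<in> {1..n} \<and> X j < k"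
          using count_east_before_north[of j] True ep(3) k by simp
      next
        assume h: "j \<in> {1..n} \<and> X j < k"
        show "j \<in> {1..n} \<and> X j + j - 1 < Q"
        proof (rule ccontr)
          assume "\<not> (j \<in> {1..n} \<and> X j + j - 1 < Q)"
          then have "Suc Q \<le> X j + j - 1" using True ne by simp
          then have "length (filter Not (take (Suc Q) path)) \<le> length (filter Not (take (X j + j - 1) path))"
            by (rule length_filter_take_mono)
          moreover have "take (Suc Q) path = take Q path @ [path!Q]"
            using ep(1) by (simp add: take_Suc_conv_app_nth)
          ultimately show False using ep(2,3) count_east_before_north[of j] True h k by simp
        qed
      qed
    qed auto
  qed
  finally show ?thesis .
qed

lemma valley_path_of_iff:
  "1 \<le> k \<Longrightarrow> k \<le> n \<Longrightarrow> (\<exists>c. valley path c k) \<longleftrightarrow> X k \<noteq> X (k-1)"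
proof -
  assume k: "1 \<le> k" "k \<le> n"
  have "(\<exists>c. valley path c k) \<longleftrightarrow> (\<exists>i. Suc i < length path \<and> \<not> path!i \<and> path!(Suc i) \<and> length (filter id (take (Suc (Suc i)) path)) = k)"
    unfolding valley_def by auto
  also have "\<dots> \<longleftrightarrow> (1 \<le> X k + k - 1 \<and> \<not> path!(X k + k - 2))"
  proof
    assume "\<exists>i. Suc i < length path \<and> \<not> path!i \<and> path!(Suc i) \<and> length (filter id (take (Suc (Suc i)) path)) = k"
    then obtain i where i: "Suc i < length path" "\<not> path!i" "path!(Suc i)" "length (filter id (take (Suc (Suc i)) path)) = k"
      by blast
    obtain j where jj: "j \<in> {1..n}" "Suc i = X j + j - 1" using i(1,3) nth_path_of by auto
    have "Suc (Suc i) = X j + j" using jj by simp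
    then have "{k'\<in>{1..n}. X k' + k' - 1 < Suc (Suc i)} = {1..j}"
      using north_pos_below[of j] jj by simp
    then have "j = k" using i(4) count_north_take by simp
    then have "X k + k - 2 = i" "1 \<le> X k + k - 1" using jj by auto
    then show "1 \<le> X k + k - 1 \<and> \<not> path!(X k + k - 2)" using i(2) by simp
  next
    assume h: "1 \<le> X k + k - 1 \<and> \<not> path!(X k + k - 2)"
    define i where "i = X k + k - 2"
    have si: "Suc i = X k + k - 1" using h i_def by linarith
    have "Suc i < length path" using si north_pos_bound[OF k] by simp
    moreover have "path!(Suc i)" using si nth_path_of north_pos_bound[OF k] k by auto
    moreover have "length (filter id (take (Suc (Suc i)) path)) = k"
    proof -
      have "Suc (Suc i) = X k + k" using si k by simp
      then have "{k'\<in>{1..n}. X k' + k' - 1 < Suc (Suc i)} = {1..k}"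
        using north_pos_below[of k] k by simp
      then show ?thesis using count_north_take by simp
    qed
    moreover have "\<not> path!i" using h i_def by simp
    ultimately show "\<exists>i. Suc i < length path \<and> \<not> path!i \<and> path!(Suc i) \<and> length (filter id (take (Suc (Suc i)) path)) = k"
      by blast
  qed
  also have "\<dots> \<longleftrightarrow> X k \<noteq> X (k-1)"
  proof (cases "k = 1")
    case True
    then show ?thesis using x_sequence_less[OF X, of 1] x_sequence_0[OF X] k by simp
  next
    case False
    then have k2: "2 \<le> k" using k by simp
    have "path!(X k + k - 2) \<longleftrightarrow> (\<exists>j\<in>{1..n}. X k + k - 2 = X j + j - 1)"
      using nth_path_of[of "X k + k - 2"] north_pos_bound[OF k] by simp
    also have "\<dots> \<longleftrightarrow> X (k-1) = X k"
    proof
      assume "\<exists>j\<in>{1..n}. X k + k - 2 = X j + j - 1"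
      then obtain j where jj: "j \<in> {1..n}" "X k + k - 2 = X j + j - 1" by blast
      have "j \<noteq> k"
      proof
        assume "j = k" then show False using jj(2) k2 by simp
      qed
      moreover have "\<not> k < j"
      proof
        assume "k < j" then have "X k + k - 1 < X j + j - 1"
          using north_pos_less[of k j] jj k2 by simp
        then show False using jj(2) by linarith
      qed
      ultimately have "j < k" by simp
      then have "j \<le> k - 1" by simp
      moreover have "\<not> j < k - 1"
      proof
        assume "j < k - 1"
        then have "X j + j - 1 < X (k-1) + (k-1) - 1" using north_pos_less[of j "k-1"] jj k by simp
        then show False using jj x_sequence_mono[OF X, of "k-1" k] k k2 by simp
      qed
      ultimately have "j = k - 1" by simp
      then show "X (k-1) = X k" using jj x_sequence_mono[OF X, of "k-1" k] k k2 by simp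
    next
      assume "X (k-1) = X k"
      then show "\<exists>j\<in>{1..n}. X k + k - 2 = X j + j - 1"
        using k k2 by (intro bexI[of _ "k-1"]) auto
    qed
    finally show ?thesis using k2 by auto
  qed
  finally show ?thesis .
qed

end

lemma path_of_cong:
  "(\<And>k. 1 \<le> k \<Longrightarrow> k \<le> n \<Longrightarrow> X k = Y k) \<Longrightarrow> path_of n X = path_of n Y"
  unfolding path_of_def by (intro map_cong refl bex_cong) auto

lemma xseq_path_of:
  assumes X: "x_sequence n X" and beyond: "\<And>k. n < k \<Longrightarrow> X k = 0"
  shows "xseq n (path_of n X) = X"
proof
  fix k show "xseq n (path_of n X) k = X k"
    using xcoord_path_of[OF X, of k] x_sequence_0[OF X] beyond[of k] unfolding xseq_def by auto
qed

section \<open>The statistics on the path of an x-sequence\<close>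

context
  fixes n :: nat and X :: "nat \<Rightarrow> nat"
  assumes X: "x_sequence n X"
begin

lemma card_x_less_Suc:
  "card {j\<in>{1..n}. X j < Suc k} = card {j\<in>{1..n}. X j < k} + card {j\<in>{1..n}. X j = k}"
proof -
  have "{j\<in>{1..n}. X j < Suc k} = {j\<in>{1..n}. X j < k} \<union> {j\<in>{1..n}. X j = k}"
    by auto
  moreover have "{j\<in>{1..n}. X j < k} \<inter> {j\<in>{1..n}. X j = k} = {}" by auto
  ultimately show ?thesis by (simp add: card_Un_disjoint)
qed

lemma card_x_less_n: "card {j\<in>{1..n}. X j < n} = n"
proof -
  have "{j\<in>{1..n}. X j < n} = {1..n}"
  proof (rule set_eqI)
    fix j show "j \<in> {j\<in>{1..n}. X j < n} \<longleftrightarrow> j \<in> {1..n}"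
      using x_sequence_less[OF X, of j] by auto
  qed
  then show ?thesis by simp
qed

lemma Suc_le_card_x_less: "k < n \<Longrightarrow> Suc k \<le> card {j\<in>{1..n}. X j < Suc k}"
proof -
  assume k: "k < n"
  have "{1..Suc k} \<subseteq> {j\<in>{1..n}. X j < Suc k}"
  proof
    fix j assume j: "j \<in> {1..Suc k}"
    then have "X j < j" using x_sequence_less[OF X, of j] k by simp
    then show "j \<in> {j\<in>{1..n}. X j < Suc k}" using j k by auto
  qed
  then have "card {1..Suc k} \<le> card {j\<in>{1..n}. X j < Suc k}" by (intro card_mono) auto
  then show ?thesis by simp
qed

lemma card_x_less_le: "card {j\<in>{1..n}. X j < m} \<le> n"
proof -
  have "card {j\<in>{1..n}. X j < m} \<le> card {1..n}" by (intro card_mono) auto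
  then show ?thesis by simp
qed

lemma col_area_path_of:
  "1 \<le> k \<Longrightarrow> k \<le> n \<Longrightarrow> col_area n (path_of n X) k = int (card {j\<in>{1..n}. X j < k}) - int k"
  unfolding col_area_def using ycoord_path_of[OF X] by simp

lemma row_area_path_of: "k \<le> n \<Longrightarrow> row_area (path_of n X) k = int k - 1 - int (X k)"
  using xcoord_path_of[OF X, of k] x_sequence_0[OF X] unfolding row_area_def by auto

lemma setN_path_of: "setN n (path_of n X) = {k\<in>{1..n}. X k = X (k-1)}"
  unfolding setN_def using valley_path_of_iff[OF X] by auto

lemma setD_path_of: "setD n (path_of n X) = {k\<in>{1..n}. k = n \<or> k \<notin> X`{1..n}}"
proof -
  have "k \<in> setD n (path_of n X) \<longleftrightarrow> k \<in> {k\<in>{1..n}. k = n \<or> k \<notin> X`{1..n}}" for k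
  proof (cases "1 \<le> k \<and> k \<le> n")
    case True
    show ?thesis
    proof (cases "k = n")
      case True2: True
      have "col_area n (path_of n X) (k+1) = -1" unfolding col_area_def using True2 by simp
      moreover have "col_area n (path_of n X) k = 0"
        using col_area_path_of[of k] True True2 card_x_less_n by simp
      ultimately show ?thesis unfolding setD_def using True True2 by simp
    next
      case False
      have "col_area n (path_of n X) (k+1) = int (card {j\<in>{1..n}. X j < Suc k}) - int (Suc k)"
        using col_area_path_of[of "k+1"] True False by simp
      moreover have "col_area n (path_of n X) k = int (card {j\<in>{1..n}. X j < k}) - int k"
        using col_area_path_of[of k] True by simp
      moreover have "card {j\<in>{1..n}. X j = k} = 0 \<longleftrightarrow> k \<notin> X`{1..n}"
        by auto
      ultimately show ?thesis unfolding setD_def using True False card_x_less_Suc[of k] by auto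
    qed
  next
    case False then show ?thesis unfolding setD_def by auto
  qed
  then show ?thesis by blast
qed

lemma setF_path_of_iff:
  "1 \<le> k \<Longrightarrow> k \<le> n \<Longrightarrow> k \<in> setF n (path_of n X) \<longleftrightarrow>
   (if k = n then X n = X (n-1) else X (card {j\<in>{1..n}. X j < Suc k}) = X (k-1))"
proof -
  assume k: "1 \<le> k" "k \<le> n"
  show ?thesis
  proof (cases "k = n")
    case True
    have c: "col_area n (path_of n X) (k+1) = -1" unfolding col_area_def using True by simp
    have "nat (int k + 1 + -1) = n" using True by simp
    then have "k \<in> setF n (path_of n X) \<longleftrightarrow> row_area (path_of n X) n = row_area (path_of n X) (n-1) + 1"
      unfolding setF_def using c k True by (simp add: algebra_simps)
    also have "\<dots> \<longleftrightarrow> X n = X (n-1)"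
      using row_area_path_of[of n] row_area_path_of[of "n-1"] k True by (simp add: of_nat_diff)
    finally show ?thesis using True by simp
  next
    case False
    define c where "c = card {j\<in>{1..n}. X j < Suc k}"
    have c1: "Suc k \<le> c" "c \<le> n" using Suc_le_card_x_less[of k] card_x_less_le[of "Suc k"] k False c_def
      by auto
    have col: "col_area n (path_of n X) (k+1) = int c - int (Suc k)"
      using col_area_path_of[of "k+1"] k False c_def by simp
    have "nat (int k + 1 + col_area n (path_of n X) (k + 1)) = c" using col c1 by simp
    then have "k \<in> setF n (path_of n X) \<longleftrightarrow> row_area (path_of n X) c = row_area (path_of n X) (k-1) + (int c - int (Suc k)) + 2"
      unfolding setF_def using col k by simp
    also have "\<dots> \<longleftrightarrow> X c = X (k-1)"
      using row_area_path_of[of c] row_area_path_of[of "k-1"] c1 k by (simp add: of_nat_diff)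
    finally have "k \<in> setF n (path_of n X) \<longleftrightarrow> X c = X (k-1)" .
    then show ?thesis using False c_def by simp
  qed
qed

text \<open>\<open>{j. X j < Suc k}\<close> is an initial segment \<open>{1..c}\<close>, so \<open>X c\<close> is the largest
  value of \<open>X\<close> not exceeding \<open>k\<close>.\<close>

lemma x_at_card_less_Suc_iff:
  assumes X: "x_sequence n X" and k: "1 \<le> k" "k < n"
  shows "X (card {j\<in>{1..n}. X j < Suc k}) = X k \<longleftrightarrow> (\<forall>j\<in>{1..n}. X j \<le> X k \<or> Suc k \<le> X j)"
proof -
  define S where "S = {j\<in>{1..n}. X j < Suc k}"
  have fS: "finite S" unfolding S_def by simp
  have sk: "Suc k \<in> S" unfolding S_def using k x_sequence_less[OF X, of "Suc k"] by simp
  hence ne: "S \<noteq> {}" by auto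
  define m where "m = Max S"
  have mS: "m \<in> S" unfolding m_def using fS ne by simp
  have Sm: "S = {1..m}"
  proof (rule set_eqI)
    fix i show "i \<in> S \<longleftrightarrow> i \<in> {1..m}"
    proof
      assume "i \<in> S" then show "i \<in> {1..m}" unfolding m_def using fS S_def by auto
    next
      assume i: "i \<in> {1..m}"
      have "m \<le> n" "X m < Suc k" using mS unfolding S_def by auto
      then show "i \<in> S" using i x_sequence_mono[OF X, of i m] unfolding S_def by auto
    qed
  qed
  hence cm: "card S = m" by simp
  have km: "Suc k \<le> m" using sk Sm by auto
  have Xm: "X m < Suc k" "m \<le> n" using mS unfolding S_def by auto
  have Xkm: "X k \<le> X m" using x_sequence_mono[OF X, of k m] km Xm by simp
  show ?thesis
  proof
    assume eq: "X (card {j\<in>{1..n}. X j < Suc k}) = X k"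
    show "\<forall>j\<in>{1..n}. X j \<le> X k \<or> Suc k \<le> X j"
    proof
      fix j assume j: "j \<in> {1..n}"
      show "X j \<le> X k \<or> Suc k \<le> X j"
      proof (cases "X j < Suc k")
        case True
        hence "j \<in> S" using j S_def by simp
        hence "j \<le> m" using Sm by simp
        hence "X j \<le> X m" using x_sequence_mono[OF X, of j m] Xm by simp
        then show ?thesis using eq cm S_def by simp
      qed simp
    qed
  next
    assume h: "\<forall>j\<in>{1..n}. X j \<le> X k \<or> Suc k \<le> X j"
    have "m \<in> {1..n}" using Xm km by simp
    then have "X m \<le> X k" using h Xm by force
    then show "X (card {j\<in>{1..n}. X j < Suc k}) = X k" using Xkm cm S_def by simp
  qed
qed

lemma mem_setF_path_of_iff_height:
  assumes k: "k \<in> setN n (path_of n X)"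
  shows "k \<in> setF n (path_of n X) \<longleftrightarrow> height (steps_of n X) k = 0"
proof -
  have k1: "1 \<le> k" "k \<le> n" and level: "X k = X (k-1)" using k unfolding setN_path_of by auto
  show ?thesis
  proof (cases "k = n")
    case True
    then show ?thesis using setF_path_of_iff[OF k1] level sum_steps_of[OF X] by simp
  next
    case False
    then have "k < n" using k1 by simp
    then have "k \<in> setF n (path_of n X) \<longleftrightarrow> (\<forall>j\<in>{1..n}. X j \<le> X k \<or> Suc k \<le> X j)"
      using setF_path_of_iff[OF k1] x_at_card_less_Suc_iff[OF X k1(1)] level False by simp
    also have "\<dots> \<longleftrightarrow> height (steps_of n X) k = 0"
      using height_steps_of_eq_0_iff[OF X k1(2)] by (simp add: Suc_le_eq)
    finally show ?thesis .
  qed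
qed

lemma setN_inter_setD_subset_setF_iff:
  "setN n (path_of n X) \<inter> setD n (path_of n X) \<subseteq> setF n (path_of n X) \<longleftrightarrow> admissible n X"
proof -
  have "setN n (path_of n X) \<inter> setD n (path_of n X) \<subseteq> setF n (path_of n X) \<longleftrightarrow>
      (\<forall>k\<in>{1..n}. X k = X (k-1) \<longrightarrow> k = n \<or> k \<notin> X`{1..n} \<longrightarrow> height (steps_of n X) k = 0)"
    using mem_setF_path_of_iff_height unfolding setN_path_of setD_path_of by auto
  also have "\<dots> \<longleftrightarrow> admissible n X"
    unfolding admissible_def using sum_steps_of[OF X] by auto
  finally show ?thesis .
qed

lemma setN_inter_setD_empty_iff:
  "setN n (path_of n X) \<inter> setD n (path_of n X) = {} \<longleftrightarrow>
    (\<forall>k\<in>{1..n}. X k = X (k-1) \<longrightarrow> k < n \<and> k \<in> X`{1..n})"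
  unfolding setN_path_of setD_path_of by auto

end

section \<open>The bijections\<close>

definition path_steps :: "nat \<Rightarrow> bool list \<Rightarrow> int list" where
  "path_steps n p = steps_of n (xseq n p)"

lemma dyck_path_setN_inter_setD_subset_setF_iff:
  assumes "dyck_path n p"
  shows "setN n p \<inter> setD n p \<subseteq> setF n p \<longleftrightarrow> admissible n (xseq n p)"
  using setN_inter_setD_subset_setF_iff[OF x_sequence_xseq[OF assms]]
  unfolding path_of_xseq[OF assms] .

lemma dyck_path_riordan_path_iff:
  assumes p: "dyck_path n p" and adm: "admissible n (xseq n p)"
  shows "riordan_path n (path_steps n p) \<longleftrightarrow> setN n p \<inter> setD n p = {}"
proof -
  note X = x_sequence_xseq[OF p]
  have "setN n p \<inter> setD n p = {} \<longleftrightarrow>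
      (\<forall>k\<in>{1..n}. xseq n p k = xseq n p (k-1) \<longrightarrow> k < n \<and> k \<in> xseq n p ` {1..n})"
    using setN_inter_setD_empty_iff[OF X] unfolding path_of_xseq[OF p] .
  then show ?thesis
    unfolding path_steps_def riordan_path_steps_of_iff[OF X adm] by simp
qed

lemma path_steps_of_motzkin_path:
  assumes n: "1 \<le> n" and s: "motzkin_path n s"
  obtains p where "dyck_path n p" "admissible n (xseq n p)" "path_steps n p = s"
proof
  let ?X = "x_sequence_of n s"
  have X: "x_sequence n ?X" by (rule x_sequence_x_sequence_of[OF s n])
  have xseq: "xseq n (path_of n ?X) = ?X" by (rule xseq_path_of[OF X x_sequence_of_beyond])
  show "dyck_path n (path_of n ?X)" by (rule dyck_path_path_of[OF X])
  show "admissible n (xseq n (path_of n ?X))"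
    unfolding xseq by (rule admissible_x_sequence_of[OF s n])
  show "path_steps n (path_of n ?X) = s"
    unfolding path_steps_def xseq by (rule steps_of_x_sequence_of[OF s n])
qed

lemma bij_betw_path_steps_motzkin:
  assumes n: "1 \<le> n"
  shows "bij_betw (path_steps n)
    {p. dyck_path n p \<and> setN n p \<inter> setD n p \<subseteq> setF n p} {s. motzkin_path n s}"
    (is "bij_betw _ ?A _")
proof (rule bij_betw_imageI)
  have A: "p \<in> ?A \<longleftrightarrow> dyck_path n p \<and> admissible n (xseq n p)" for p
    using dyck_path_setN_inter_setD_subset_setF_iff by blast
  show "inj_on (path_steps n) ?A"
  proof (rule inj_onI)
    fix p q assume "p \<in> ?A" "q \<in> ?A" and eq: "path_steps n p = path_steps n q"
    then have p: "dyck_path n p" "admissible n (xseq n p)"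
      and q: "dyck_path n q" "admissible n (xseq n q)" using A by auto
    have "path_of n (xseq n p) = path_of n (xseq n q)"
      using steps_of_inj[OF x_sequence_xseq[OF p(1)] x_sequence_xseq[OF q(1)] p(2) q(2)] eq
      unfolding path_steps_def by (intro path_of_cong) auto
    then show "p = q" using path_of_xseq p(1) q(1) by metis
  qed
  show "path_steps n ` ?A = {s. motzkin_path n s}"
  proof
    show "path_steps n ` ?A \<subseteq> {s. motzkin_path n s}"
      using motzkin_path_steps_of x_sequence_xseq unfolding path_steps_def by blast
    show "{s. motzkin_path n s} \<subseteq> path_steps n ` ?A"
    proof
      fix s assume "s \<in> {s. motzkin_path n s}"
      then obtain p where "dyck_path n p" "admissible n (xseq n p)" "path_steps n p = s"
        using path_steps_of_motzkin_path[OF n] by blast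
      then show "s \<in> path_steps n ` ?A" using A by blast
    qed
  qed
qed

lemma bij_betw_path_steps_riordan:
  assumes n: "1 \<le> n"
  shows "bij_betw (path_steps n)
    {p. dyck_path n p \<and> setN n p \<inter> setD n p = {}} {s. riordan_path n s}"
proof (rule bij_betw_subset[OF bij_betw_path_steps_motzkin[OF n]])
  let ?A = "{p. dyck_path n p \<and> setN n p \<inter> setD n p \<subseteq> setF n p}"
  let ?B = "{p. dyck_path n p \<and> setN n p \<inter> setD n p = {}}"
  have riordan: "riordan_path n (path_steps n p) \<longleftrightarrow> p \<in> ?B" if "p \<in> ?A" for p
    using that dyck_path_riordan_path_iff dyck_path_setN_inter_setD_subset_setF_iff by blast
  show "?B \<subseteq> ?A" by auto
  show "path_steps n ` ?B = {s. riordan_path n s}"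
  proof
    show "path_steps n ` ?B \<subseteq> {s. riordan_path n s}"
      using riordan by (auto simp del: Int_iff)
    show "{s. riordan_path n s} \<subseteq> path_steps n ` ?B"
    proof
      fix s assume s: "s \<in> {s. riordan_path n s}"
      then have "s \<in> path_steps n ` ?A"
        using bij_betw_path_steps_motzkin[OF n] unfolding bij_betw_def riordan_path_def by auto
      then obtain p where "p \<in> ?A" "s = path_steps n p" by blast
      then show "s \<in> path_steps n ` ?B" using riordan s by blast
    qed
  qed
qed

theorem mainTheorem7:
  fixes n :: nat
  assumes "n \<ge> 1"
  shows "card {p. dyck_path n p \<and> setN n p \<inter> setD n p \<subseteq> setF n p} = card {s. motzkin_path n s}
       \<and> card {p. dyck_path n p \<and> setN n p \<inter> setD n p = {}} = card {s. riordan_path n s}"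
  using bij_betw_same_card[OF bij_betw_path_steps_motzkin[OF assms]]
    bij_betw_same_card[OF bij_betw_path_steps_riordan[OF assms]] by simp
end
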